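(* Let $\phi\in C^3((0,\infty))$, $\eta=\phi'$ and $\hat\eta(r)=\eta(r)+2\eta(2r)$, and suppose there are constants $0<a_0<\tilde r_1<\tilde r_2<2a_0$ and $a_1>a_0$ such that: $\eta'(r)>0$ for $0<r<\tilde r_1$ and $\eta'(r)<0$ for $r>\tilde r_1$; $\eta''(r)<0$ for $0<r<\tilde r_2$ and $\eta''(r)>0$ for $r>\tilde r_2$; $\hat\eta(r)<0$ for $0<r<a_0$ and $\hat\eta(r)>0$ for $r>a_0$; $\hat\eta'(r)>0$ for $0<r<a_1$ and $\hat\eta'(r)<0$ for $r>a_1$. Let $N,K$ be positive integers with $K<N-1$ and define $\hat{\mathbf\Psi}^F:(0,\infty)^{2N+1}\to\mathbb R^{2N+1}$ by $\hat\psi^F_j(\mathbf r)=\eta(r_j)+2\eta(2r_j)$ for $-N\le j\le -K$ and for $K\le j\le N$, and $\hat\psi^F_j(\mathbf r)=\eta(r_j)+\eta(r_j+r_{j-1})+\eta(r_j+r_{j+1})+[2\eta(2r_K)-\eta(r_K+r_{K-1})-\eta(r_K+r_{K+1})]$ for $-K+1\le j\le K-1$. Suppose $r_L,r_U$ satisfy $\tilde r_2/2<r_L<r_U$ and $\eta'(r_U)+12\eta'(2r_L)\ge0$. If $\mathbf\Phi=(\Phi_{-N},\dots,\Phi_N)\in\mathbb R^{2N+1}$ satisfies $\eta(r_L)+4\eta(2r_L)-2\eta(2r_U)<\Phi_j<\eta(r_U)+4\eta(2r_U)-2\eta(2r_L)$ for $j=-N,\dots,N$, then $\hat{\mathbf\Psi}^F(\mathbf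 r)=\mathbf\Phi$ has a unique solution $\mathbf r$ in $\Omega=(r_L,r_U)^{2N+1}$.
   Context: $\hat{\mathbf\Psi}^F$ is the (symmetrized) internal conjugate force of the force-based quasicontinuum approximation of a one-dimensional atomic chain with nearest and next-nearest neighbour interactions given by the pair potential $\phi$, and $\mathbf\Phi$ is an external conjugate force. *)

theory Defs
  imports "HOL-Analysis.Analysis"
begin

text \<open>Strains are indexed by the integers; only indices -N..N are relevant.
  psiF eta N K r j is the j-th component of the symmetrized force-based QC
  internal conjugate force.\<close>

definition psiF :: "(real \<Rightarrow> real) \<Rightarrow> int \<Rightarrow> int \<Rightarrow> (int \<Rightarrow> real) \<Rightarrow> int \<Rightarrow> real" where
  "psiF eta N K r j =
     (if (-N \<le> j \<and> j \<le> -K) \<or> (K \<le> j \<and> j \<le> N) then eta (r j) + 2 * eta (2 * r j)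
      else eta (r j) + eta (r j + r (j - 1)) + eta (r j + r (j + 1))
           + (2 * eta (2 * r K) - eta (r K + r (K - 1)) - eta (r K + r (K + 1))))"

text \<open>Omega = (rL, rU)^(2N+1), represented extensionally (value 0 outside -N..N).\<close>
definition Omega :: "int \<Rightarrow> real \<Rightarrow> real \<Rightarrow> (int \<Rightarrow> real) set" where
  "Omega N rL rU = {r. (\<forall>j\<in>{-N..N}. rL < r j \<and> r j < rU) \<and> (\<forall>j. j \<notin> {-N..N} \<longrightarrow> r j = 0)}"

end

theory Submission
  imports Defs
begin

text \<open>The proof is a contraction argument on the closed box [rL, rU] in every coordinate -N..N.
  On the window [rL, rU] the slope eta1 lies in [eta1 rU, eta1 rL], and on second-neighbour bonds,
  which are at least 2 rL > r2, it lies in [eta1 (2 rL), 0]. Hence the relaxation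
  r_j \<mapsto> r_j - (psi_j(r) - Phi_j) / eta1 rL, clamped to [rL, rU], is a contraction in the sup norm
  with factor 1 - (eta1 rU + 10 eta1 (2 rL)) / eta1 rL, which is less than 1 because
  eta1 rU + 12 eta1 (2 rL) \<ge> 0 and eta1 (2 rL) < 0; the 10 collects 4 from the bonds of psi_j and 6 from
  the interface correction at K. The bounds on Phi make the residual negative on every lower face and
  positive on every upper face of the box, so the clamp is inactive at the fixed point, which therefore
  solves the equations in Omega; conversely every solution in Omega is a fixed point.\<close>

text \<open>The library's completeness instance for bounded continuous functions asks for a metric
  domain, but the argument only needs uniform convergence; the index type int is not a metric space.\<close>

lemma convergent_Cauchy_bcontfun:
  fixes f :: "nat \<Rightarrow> 'a::topological_space \<Rightarrow>\<^sub>C 'b::complete_space"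
  assumes "Cauchy f"
  shows "convergent f"
proof -
  obtain g where "uniform_limit UNIV f g sequentially"
    using uniformly_convergent_eq_cauchy[of "\<lambda>_. True" f] assms
    unfolding Cauchy_def uniform_limit_sequentially_iff
    by (metis dist_fun_lt_imp_dist_val_lt)
  from uniform_limit_bcontfunE[OF this sequentially_bot]
  obtain l where "f \<longlonglongrightarrow> l"
    by metis
  then show ?thesis
    by (rule convergentI)
qed

lemma isCont_bcontfun_eval: "isCont (\<lambda>F. apply_bcontfun F j) F"
  unfolding continuous_at
  by (rule tendsto_uniform_limitI[OF tendsto_bcontfun_uniform_limit[OF tendsto_ident_at]]) simp

definition box_on :: "'a set \<Rightarrow> real \<Rightarrow> real \<Rightarrow> ('a \<Rightarrow> real) set" where
  "box_on I lo hi = {x. (\<forall>j\<in>I. lo \<le> x j \<and> x j \<le> hi) \<and> (\<forall>j. j \<notin> I \<longrightarrow> x j = 0)}"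

lemma box_on_bcontfun:
  fixes x :: "'a::discrete_topology \<Rightarrow> real"
  assumes "x \<in> box_on I lo hi"
  shows "x \<in> bcontfun"
proof (rule bcontfun_normI)
  show "norm (x j) \<le> \<bar>lo\<bar> + \<bar>hi\<bar>" for j
    using assms by (cases "j \<in> I") (auto simp: box_on_def)
qed simp

lemma box_on_memD: "x \<in> box_on I lo hi \<Longrightarrow> i \<in> I \<Longrightarrow> x i \<in> {lo..hi}"
  by (simp add: box_on_def)

lemma contraction_box_on_unique_fixpoint:
  fixes T :: "('a::discrete_topology \<Rightarrow> real) \<Rightarrow> 'a \<Rightarrow> real"
  assumes "lo \<le> hi" "0 \<le> c" "c < 1"
    and maps: "\<And>x. x \<in> box_on I lo hi \<Longrightarrow> T x \<in> box_on I lo hi"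
    and contr: "\<And>x y \<delta>. x \<in> box_on I lo hi \<Longrightarrow> y \<in> box_on I lo hi \<Longrightarrow>
      \<forall>j\<in>I. \<bar>x j - y j\<bar> \<le> \<delta> \<Longrightarrow> \<forall>j\<in>I. \<bar>T x j - T y j\<bar> \<le> c * \<delta>"
  shows "\<exists>!x. x \<in> box_on I lo hi \<and> T x = x"
proof -
  define X where "X j = (if j \<in> I then {lo..hi} else {0})" for j
  define C where "C = (\<Inter>j. (\<lambda>F. apply_bcontfun F j) -` X j)"
  have in_C: "F \<in> C \<longleftrightarrow> apply_bcontfun F \<in> box_on I lo hi" for F
    unfolding C_def box_on_def X_def by (auto split: if_splits)
  have Bcontfun_inv: "apply_bcontfun (Bcontfun x) = x" if "x \<in> box_on I lo hi" for x
    using box_on_bcontfun[OF that] by (simp add: Bcontfun_inverse)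
  define f where "f F = Bcontfun (T (apply_bcontfun F))" for F
  have f_apply: "apply_bcontfun (f F) = T (apply_bcontfun F)" if "F \<in> C" for F
    using Bcontfun_inv maps that in_C by (simp add: f_def)
  have "\<exists>!F\<in>C. f F = F"
  proof (rule Banach_fix)
    have "closed C"
      unfolding C_def X_def
      by (intro closed_INT ballI continuous_closed_vimage isCont_bcontfun_eval) auto
    show "complete C"
    proof (unfold complete_def, intro allI impI)
      fix g assume g: "(\<forall>n. g n \<in> C) \<and> Cauchy g"
      then have "convergent g"
        by (intro convergent_Cauchy_bcontfun) simp
      then obtain l where "g \<longlonglongrightarrow> l"
        unfolding convergent_def ..
      then show "\<exists>l\<in>C. g \<longlonglongrightarrow> l"
        using closed_sequentially[OF \<open>closed C\<close>] g by auto
    qed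
    have "(\<lambda>j. if j \<in> I then lo else 0) \<in> box_on I lo hi" (is "?x0 \<in> _")
      using \<open>lo \<le> hi\<close> by (simp add: box_on_def)
    then have "Bcontfun ?x0 \<in> C"
      by (simp add: in_C Bcontfun_inv)
    then show "C \<noteq> {}"
      by blast
    show "f ` C \<subseteq> C"
      using f_apply maps in_C by auto
    show "dist (f F) (f G) \<le> c * dist F G" if "F \<in> C" "G \<in> C" for F G
    proof (rule dist_bound)
      fix j
      have "\<forall>j\<in>I. \<bar>T F j - T G j\<bar> \<le> c * dist F G"
        using contr[of F G "dist F G"] that in_C dist_bounded[of F _ G] by (simp add: dist_real_def)
      moreover have "T F j = 0" "T G j = 0" if "j \<notin> I"
        using that maps in_C \<open>F \<in> C\<close> \<open>G \<in> C\<close> by (auto simp: box_on_def)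
      ultimately show "dist (f F j) (f G j) \<le> c * dist F G"
        using that \<open>0 \<le> c\<close> by (cases "j \<in> I") (auto simp: f_apply dist_real_def)
    qed
  qed fact+
  then obtain F where F: "F \<in> C" "f F = F" and F_unique: "\<And>G. G \<in> C \<Longrightarrow> f G = G \<Longrightarrow> G = F"
    by blast
  show ?thesis
  proof (intro ex1I conjI)
    show "apply_bcontfun F \<in> box_on I lo hi" "T (apply_bcontfun F) = apply_bcontfun F"
      using F f_apply in_C by metis+
    show "y = apply_bcontfun F" if "y \<in> box_on I lo hi \<and> T y = y" for y
    proof -
      have "Bcontfun y \<in> C" "f (Bcontfun y) = Bcontfun y"
        using that by (simp_all add: in_C Bcontfun_inv f_def)
      then show ?thesis
        using F_unique Bcontfun_inv that by metis
    qed
  qed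
qed

lemma abs_max_min_diff_le: "(lo::real) \<le> hi \<Longrightarrow> \<bar>max lo (min hi u) - max lo (min hi v)\<bar> \<le> \<bar>u - v\<bar>"
  by (auto simp: max_def min_def abs_if)

lemma max_min_fixpoint_imp_root:
  fixes lo hi x f :: real
  assumes "lo < hi" "x = max lo (min hi (x - f))" "x = lo \<Longrightarrow> f < 0" "x = hi \<Longrightarrow> 0 < f"
  shows "f = 0 \<and> lo < x \<and> x < hi"
  using assms unfolding max_def min_def by (smt (verit))

lemma clamped_relaxation_unique_root:
  fixes F :: "('a::discrete_topology \<Rightarrow> real) \<Rightarrow> 'a \<Rightarrow> real"
  assumes "lo < hi" "0 \<le> c" "c < 1"
    and contr: "\<And>x y \<delta> j. x \<in> box_on I lo hi \<Longrightarrow> y \<in> box_on I lo hi \<Longrightarrow>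
      \<forall>i\<in>I. \<bar>x i - y i\<bar> \<le> \<delta> \<Longrightarrow> j \<in> I \<Longrightarrow> \<bar>(x j - F x j) - (y j - F y j)\<bar> \<le> c * \<delta>"
    and lower: "\<And>x j. x \<in> box_on I lo hi \<Longrightarrow> j \<in> I \<Longrightarrow> x j = lo \<Longrightarrow> F x j < 0"
    and upper: "\<And>x j. x \<in> box_on I lo hi \<Longrightarrow> j \<in> I \<Longrightarrow> x j = hi \<Longrightarrow> 0 < F x j"
  shows "\<exists>!x. (\<forall>j\<in>I. lo < x j \<and> x j < hi \<and> F x j = 0) \<and> (\<forall>j. j \<notin> I \<longrightarrow> x j = 0)"
proof -
  define T where "T x j = (if j \<in> I then max lo (min hi (x j - F x j)) else 0)" for x j
  have "\<exists>!x. x \<in> box_on I lo hi \<and> T x = x"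
  proof (rule contraction_box_on_unique_fixpoint)
    show "T x \<in> box_on I lo hi" for x
      using \<open>lo < hi\<close> by (simp add: T_def box_on_def)
    show "\<forall>j\<in>I. \<bar>T x j - T y j\<bar> \<le> c * \<delta>"
      if "x \<in> box_on I lo hi" "y \<in> box_on I lo hi" "\<forall>i\<in>I. \<bar>x i - y i\<bar> \<le> \<delta>" for x y \<delta>
    proof
      fix j assume "j \<in> I"
      then have "\<bar>T x j - T y j\<bar> \<le> \<bar>(x j - F x j) - (y j - F y j)\<bar>"
        using abs_max_min_diff_le \<open>lo < hi\<close> by (simp add: T_def)
      also have "\<dots> \<le> c * \<delta>"
        using contr[OF that \<open>j \<in> I\<close>] .
      finally show "\<bar>T x j - T y j\<bar> \<le> c * \<delta>" .
    qed
  qed (use assms in auto)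
  then obtain x where x: "x \<in> box_on I lo hi" "T x = x"
    and x_unique: "\<And>y. y \<in> box_on I lo hi \<Longrightarrow> T y = y \<Longrightarrow> y = x"
    by blast
  show ?thesis
  proof (intro ex1I conjI ballI allI impI)
    fix j assume "j \<in> I"
    have "x j = max lo (min hi (x j - F x j))"
      using fun_cong[OF x(2), of j] \<open>j \<in> I\<close> by (simp add: T_def)
    then show "lo < x j" "x j < hi" "F x j = 0"
      using max_min_fixpoint_imp_root[OF \<open>lo < hi\<close>] lower[OF x(1) \<open>j \<in> I\<close>] upper[OF x(1) \<open>j \<in> I\<close>]
      by blast+
  next
    show "x j = 0" if "j \<notin> I" for j
      using x(1) that by (simp add: box_on_def)
  next
    fix y assume y: "(\<forall>j\<in>I. lo < y j \<and> y j < hi \<and> F y j = 0) \<and> (\<forall>j. j \<notin> I \<longrightarrow> y j = 0)"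
    then have "y \<in> box_on I lo hi"
      by (auto simp: box_on_def less_imp_le)
    moreover have "T y = y"
      using y by (auto simp: T_def)
    ultimately show "y = x"
      by (rule x_unique)
  qed
qed

lemma mean_value_slope_between:
  fixes f f' :: "real \<Rightarrow> real"
  assumes deriv: "\<And>z. lo \<le> z \<Longrightarrow> z \<le> hi \<Longrightarrow> (f has_real_derivative f' z) (at z)"
    and bounds: "\<And>z. lo \<le> z \<Longrightarrow> z \<le> hi \<Longrightarrow> m \<le> f' z \<and> f' z \<le> M"
    and "lo \<le> p" "p \<le> hi" "lo \<le> q" "q \<le> hi"
  shows "\<exists>t. m \<le> t \<and> t \<le> M \<and> f p - f q = t * (p - q)"
proof -
  have slope: "\<exists>t. m \<le> t \<and> t \<le> M \<and> f b - f a = t * (b - a)"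
    if "lo \<le> a" "a < b" "b \<le> hi" for a b
  proof -
    have "\<exists>z. a < z \<and> z < b \<and> f b - f a = (b - a) * f' z"
    proof (rule MVT2[OF \<open>a < b\<close>])
      show "(f has_real_derivative f' x) (at x)" if "a \<le> x" "x \<le> b" for x
        using \<open>lo \<le> a\<close> \<open>b \<le> hi\<close> that by (intro deriv) linarith+
    qed
    then obtain z where "a < z" "z < b" "f b - f a = (b - a) * f' z"
      by blast
    moreover have "m \<le> f' z \<and> f' z \<le> M"
      using \<open>lo \<le> a\<close> \<open>b \<le> hi\<close> \<open>a < z\<close> \<open>z < b\<close> by (intro bounds) linarith+
    ultimately show ?thesis
      by (intro exI[of _ "f' z"]) simp
  qed
  show ?thesis
  proof (cases p q rule: linorder_cases)
    case less
    then obtain t where "m \<le> t" "t \<le> M" "f q - f p = t * (q - p)"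
      using slope[of p q] assms by blast
    then show ?thesis
      by (intro exI[of _ t]) (auto simp: algebra_simps)
  next
    case equal
    then show ?thesis
      using bounds[of p] assms by (intro exI[of _ "f' p"]) auto
  next
    case greater
    then show ?thesis
      using slope[of q p] assms by blast
  qed
qed

text \<open>The continuum force eta r + 2 eta (2 r) is bond_sum eta r r r, so both regions share this form.\<close>

definition bond_sum :: "(real \<Rightarrow> real) \<Rightarrow> real \<Rightarrow> real \<Rightarrow> real \<Rightarrow> real" where
  "bond_sum eta u v w = eta u + eta (u + v) + eta (u + w)"

definition psiF_correction :: "(real \<Rightarrow> real) \<Rightarrow> int \<Rightarrow> (int \<Rightarrow> real) \<Rightarrow> real" where
  "psiF_correction eta K r = 2 * eta (2 * r K) - eta (r K + r (K - 1)) - eta (r K + r (K + 1))"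

lemma psiF_continuum:
  assumes "K \<le> \<bar>j\<bar>" "\<bar>j\<bar> \<le> N"
  shows "psiF eta N K r j = bond_sum eta (r j) (r j) (r j)"
proof -
  have continuum: "(- N \<le> j \<and> j \<le> - K) \<or> (K \<le> j \<and> j \<le> N)"
    using assms by arith
  show ?thesis
    unfolding psiF_def if_P[OF continuum] bond_sum_def by simp
qed

lemma psiF_atomistic:
  assumes "\<bar>j\<bar> < K"
  shows "psiF eta N K r j = bond_sum eta (r j) (r (j - 1)) (r (j + 1)) + psiF_correction eta K r"
proof -
  have atomistic: "\<not> ((- N \<le> j \<and> j \<le> - K) \<or> (K \<le> j \<and> j \<le> N))"
    using assms by arith
  show ?thesis
    unfolding psiF_def if_not_P[OF atomistic] bond_sum_def psiF_correction_def by simp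
qed

lemma abs_bond_sum_relaxation_le:
  fixes A B e t1 t2 t3 d dv dw \<delta> :: real
  assumes "0 < B" "A \<le> t1" "t1 \<le> B" "e \<le> t2" "t2 \<le> 0" "e \<le> t3" "t3 \<le> 0"
    and "\<bar>d\<bar> \<le> \<delta>" "\<bar>dv\<bar> \<le> \<delta>" "\<bar>dw\<bar> \<le> \<delta>"
  shows "\<bar>d - (t1 * d + t2 * (d + dv) + t3 * (d + dw)) / B\<bar> \<le> (1 - (A + 4 * e) / B) * \<delta>"
proof -
  have scaled: "\<bar>a * z\<bar> \<le> a * \<delta>" if "0 \<le> a" "\<bar>z\<bar> \<le> \<delta>" for a z :: real
    using that by (simp add: abs_mult mult_left_mono)
  have "\<bar>(B - t1 - t2 - t3) * d + (- t2) * dv + (- t3) * dw\<bar>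
      \<le> \<bar>(B - t1 - t2 - t3) * d\<bar> + \<bar>(- t2) * dv\<bar> + \<bar>(- t3) * dw\<bar>"
    by (metis abs_triangle_ineq add_right_mono order_trans)
  also have "\<dots> \<le> (B - t1 - t2 - t3) * \<delta> + (- t2) * \<delta> + (- t3) * \<delta>"
    using assms by (intro add_mono scaled) auto
  also have "\<dots> = (B - t1 - 2 * t2 - 2 * t3) * \<delta>"
    by (simp add: algebra_simps)
  also have "\<dots> \<le> (B - A - 4 * e) * \<delta>"
    using assms abs_ge_zero[of d] by (intro mult_right_mono) linarith+
  finally have "\<bar>(B - t1 - t2 - t3) * d + (- t2) * dv + (- t3) * dw\<bar> / B \<le> (B - A - 4 * e) * \<delta> / B"
    using \<open>0 < B\<close> by (simp add: divide_right_mono)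
  moreover have "d - (t1 * d + t2 * (d + dv) + t3 * (d + dw)) / B
      = ((B - t1 - t2 - t3) * d + (- t2) * dv + (- t3) * dw) / B"
    using \<open>0 < B\<close> by (simp add: field_simps)
  ultimately show ?thesis
    using \<open>0 < B\<close> by (simp add: field_simps)
qed

text \<open>The coefficient 4 t0 - tm - tp of d lies in [4 e, -2 e]; this cancellation gives 6 rather than 8.\<close>

lemma abs_psiF_correction_diff_le:
  fixes e t0 tm tp d dm dp \<delta> :: real
  assumes "e \<le> t0" "t0 \<le> 0" "e \<le> tm" "tm \<le> 0" "e \<le> tp" "tp \<le> 0"
    and "\<bar>d\<bar> \<le> \<delta>" "\<bar>dm\<bar> \<le> \<delta>" "\<bar>dp\<bar> \<le> \<delta>"
  shows "\<bar>2 * (t0 * (2 * d)) - tm * (d + dm) - tp * (d + dp)\<bar> \<le> - 6 * e * \<delta>"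
proof -
  have "2 * (t0 * (2 * d)) - tm * (d + dm) - tp * (d + dp) = (4 * t0 - tm - tp) * d - tm * dm - tp * dp"
    by (simp add: algebra_simps)
  also have "\<bar>\<dots>\<bar> \<le> \<bar>(4 * t0 - tm - tp) * d\<bar> + \<bar>tm * dm\<bar> + \<bar>tp * dp\<bar>"
    by arith
  also have "\<dots> \<le> (- 4 * e) * \<delta> + (- e) * \<delta> + (- e) * \<delta>"
    unfolding abs_mult using assms by (intro add_mono mult_mono) auto
  finally show ?thesis
    by (simp add: algebra_simps)
qed

lemma atomistic_neighbours_subset:
  fixes j K N :: int
  assumes "\<bar>j\<bar> < K" "K < N"
  shows "{j - 1, j, j + 1} \<union> {K - 1..K + 1} \<subseteq> {-N..N}"
  using assms by auto

locale strain_window =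
  fixes eta eta1 eta2 :: "real \<Rightarrow> real" and r2 rL rU :: real
  assumes eta_deriv: "\<And>r. 0 < r \<Longrightarrow> (eta has_real_derivative eta1 r) (at r)"
    and eta1_deriv: "\<And>r. 0 < r \<Longrightarrow> (eta1 has_real_derivative eta2 r) (at r)"
    and r2_pos: "0 < r2"
    and eta1_neg: "\<And>r. r2 < r \<Longrightarrow> eta1 r < 0"
    and eta2_neg: "\<And>r. 0 < r \<Longrightarrow> r < r2 \<Longrightarrow> eta2 r < 0"
    and eta2_pos: "\<And>r. r2 < r \<Longrightarrow> 0 < eta2 r"
    and window: "r2 / 2 < rL" "rL < rU" "0 \<le> eta1 rU + 12 * eta1 (2 * rL)"
begin

lemma rL_pos: "0 < rL"
  using r2_pos window by linarith

lemma eta1_2rL_neg: "eta1 (2 * rL) < 0"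
  using eta1_neg window by simp

lemma eta1_rU_pos: "0 < eta1 rU"
  using eta1_2rL_neg window by linarith

lemma rU_le_r2: "rU \<le> r2"
  using eta1_neg[of rU] eta1_rU_pos by fastforce

lemma continuous_on_eta1: "0 < a \<Longrightarrow> continuous_on {a..b} eta1"
  using eta1_deriv by (intro DERIV_atLeastAtMost_imp_continuous_on) (meson less_le_trans)

lemma eta1_antimono:
  assumes "0 < p" "p \<le> q" "q \<le> r2"
  shows "eta1 q \<le> eta1 p"
proof (rule DERIV_nonpos_imp_decreasing_open[OF \<open>p \<le> q\<close>])
  show "\<exists>y. (eta1 has_real_derivative y) (at x) \<and> y \<le> 0" if "p < x" "x < q" for x
    using that assms eta1_deriv[of x] eta2_neg[of x] by force
  show "continuous_on {p..q} eta1"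
    using assms continuous_on_eta1 by blast
qed

lemma eta1_mono:
  assumes "r2 \<le> p" "p \<le> q"
  shows "eta1 p \<le> eta1 q"
proof (rule DERIV_nonneg_imp_increasing_open[OF \<open>p \<le> q\<close>])
  show "\<exists>y. (eta1 has_real_derivative y) (at x) \<and> 0 \<le> y" if "p < x" "x < q" for x
    using that assms r2_pos eta1_deriv[of x] eta2_pos[of x] by force
  show "continuous_on {p..q} eta1"
    using assms r2_pos continuous_on_eta1 by simp
qed

lemma eta1_window_bounds: "rL \<le> z \<Longrightarrow> z \<le> rU \<Longrightarrow> eta1 rU \<le> eta1 z \<and> eta1 z \<le> eta1 rL"
  using eta1_antimono rL_pos rU_le_r2 by auto

lemma eta1_far_bounds: "2 * rL \<le> z \<Longrightarrow> eta1 (2 * rL) \<le> eta1 z \<and> eta1 z \<le> 0"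
  using eta1_mono[of "2 * rL" z] eta1_neg[of z] window by auto

lemma eta_window_slope:
  "rL \<le> p \<Longrightarrow> p \<le> rU \<Longrightarrow> rL \<le> q \<Longrightarrow> q \<le> rU \<Longrightarrow>
    \<exists>t. eta1 rU \<le> t \<and> t \<le> eta1 rL \<and> eta p - eta q = t * (p - q)"
  using eta_deriv rL_pos eta1_window_bounds
  by (intro mean_value_slope_between[where lo = rL and hi = rU and f' = eta1]) auto

lemma eta_far_slope:
  "2 * rL \<le> p \<Longrightarrow> 2 * rL \<le> q \<Longrightarrow>
    \<exists>t. eta1 (2 * rL) \<le> t \<and> t \<le> 0 \<and> eta p - eta q = t * (p - q)"
  using eta_deriv rL_pos eta1_far_bounds
  by (intro mean_value_slope_between[where lo = "2 * rL" and hi = "max p q" and f' = eta1]) auto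

lemma eta_far_antimono:
  assumes "2 * rL \<le> p" "p \<le> q"
  shows "eta q \<le> eta p"
proof -
  obtain t where "t \<le> 0" "eta q - eta p = t * (q - p)"
    using eta_far_slope[of q p] assms by auto
  moreover have "t * (q - p) \<le> 0"
    using \<open>t \<le> 0\<close> assms by (simp add: mult_nonpos_nonneg)
  ultimately show ?thesis
    by simp
qed

lemma eta1_rL_pos: "0 < eta1 rL"
  using eta1_window_bounds[of rL] eta1_rU_pos window by linarith

lemma contraction_factor_bounds:
  "0 \<le> 1 - (eta1 rU + 10 * eta1 (2 * rL)) / eta1 rL"
  "1 - (eta1 rU + 10 * eta1 (2 * rL)) / eta1 rL < 1"
proof -
  have "eta1 rU \<le> eta1 rL"
    using eta1_window_bounds[of rU] window by simp
  then show "0 \<le> 1 - (eta1 rU + 10 * eta1 (2 * rL)) / eta1 rL"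
    using eta1_2rL_neg eta1_rL_pos by (simp add: divide_le_eq_1)
  show "1 - (eta1 rU + 10 * eta1 (2 * rL)) / eta1 rL < 1"
    using eta1_2rL_neg eta1_rL_pos window by simp
qed

lemma bond_sum_relaxation_lipschitz:
  assumes "u \<in> {rL..rU}" "v \<in> {rL..rU}" "w \<in> {rL..rU}" "u' \<in> {rL..rU}" "v' \<in> {rL..rU}" "w' \<in> {rL..rU}"
    and "\<bar>u - u'\<bar> \<le> \<delta>" "\<bar>v - v'\<bar> \<le> \<delta>" "\<bar>w - w'\<bar> \<le> \<delta>"
  shows "\<bar>(u - bond_sum eta u v w / eta1 rL) - (u' - bond_sum eta u' v' w' / eta1 rL)\<bar>
    \<le> (1 - (eta1 rU + 4 * eta1 (2 * rL)) / eta1 rL) * \<delta>"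
proof -
  obtain t1 where t1: "eta1 rU \<le> t1" "t1 \<le> eta1 rL" "eta u - eta u' = t1 * (u - u')"
    using eta_window_slope[of u u'] assms by auto
  obtain t2 where t2: "eta1 (2 * rL) \<le> t2" "t2 \<le> 0" "eta (u + v) - eta (u' + v') = t2 * (u + v - (u' + v'))"
    using eta_far_slope[of "u + v" "u' + v'"] assms by auto
  obtain t3 where t3: "eta1 (2 * rL) \<le> t3" "t3 \<le> 0" "eta (u + w) - eta (u' + w') = t3 * (u + w - (u' + w'))"
    using eta_far_slope[of "u + w" "u' + w'"] assms by auto
  have "bond_sum eta u v w - bond_sum eta u' v' w'
      = (eta u - eta u') + (eta (u + v) - eta (u' + v')) + (eta (u + w) - eta (u' + w'))"
    by (simp add: bond_sum_def)
  also have "\<dots> = t1 * (u - u') + t2 * ((u - u') + (v - v')) + t3 * ((u - u') + (w - w'))"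
    using t1(3) t2(3) t3(3) by (simp add: algebra_simps)
  finally have diff: "bond_sum eta u v w - bond_sum eta u' v' w'
      = t1 * (u - u') + t2 * ((u - u') + (v - v')) + t3 * ((u - u') + (w - w'))" .
  have "(u - bond_sum eta u v w / eta1 rL) - (u' - bond_sum eta u' v' w' / eta1 rL)
      = (u - u') - (bond_sum eta u v w - bond_sum eta u' v' w') / eta1 rL"
    unfolding diff_divide_distrib by linarith
  also have "\<dots> = (u - u') - (t1 * (u - u') + t2 * ((u - u') + (v - v')) + t3 * ((u - u') + (w - w'))) / eta1 rL"
    by (simp only: diff)
  also have "\<bar>\<dots>\<bar> \<le> (1 - (eta1 rU + 4 * eta1 (2 * rL)) / eta1 rL) * \<delta>"
    using t1 t2 t3 assms eta1_rL_pos by (intro abs_bond_sum_relaxation_le) auto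
  finally show ?thesis .
qed

lemma psiF_correction_lipschitz:
  assumes "\<forall>i\<in>{K - 1..K + 1}. x i \<in> {rL..rU} \<and> y i \<in> {rL..rU} \<and> \<bar>x i - y i\<bar> \<le> \<delta>"
  shows "\<bar>psiF_correction eta K x - psiF_correction eta K y\<bar> \<le> - 6 * eta1 (2 * rL) * \<delta>"
proof -
  have "K - 1 \<in> {K - 1..K + 1}" "K \<in> {K - 1..K + 1}" "K + 1 \<in> {K - 1..K + 1}"
    by simp_all
  note Km = bspec[OF assms this(1)] and K0 = bspec[OF assms this(2)] and Kp = bspec[OF assms this(3)]
  obtain t0 where t0: "eta1 (2 * rL) \<le> t0" "t0 \<le> 0" "eta (2 * x K) - eta (2 * y K) = t0 * (2 * x K - 2 * y K)"
    using eta_far_slope[of "2 * x K" "2 * y K"] K0 by auto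
  obtain tm where tm: "eta1 (2 * rL) \<le> tm" "tm \<le> 0"
      "eta (x K + x (K - 1)) - eta (y K + y (K - 1)) = tm * (x K + x (K - 1) - (y K + y (K - 1)))"
    using eta_far_slope[of "x K + x (K - 1)" "y K + y (K - 1)"] K0 Km by auto
  obtain tp where tp: "eta1 (2 * rL) \<le> tp" "tp \<le> 0"
      "eta (x K + x (K + 1)) - eta (y K + y (K + 1)) = tp * (x K + x (K + 1) - (y K + y (K + 1)))"
    using eta_far_slope[of "x K + x (K + 1)" "y K + y (K + 1)"] K0 Kp by auto
  have "psiF_correction eta K x - psiF_correction eta K y
      = 2 * (t0 * (2 * (x K - y K))) - tm * ((x K - y K) + (x (K - 1) - y (K - 1)))
        - tp * ((x K - y K) + (x (K + 1) - y (K + 1)))"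
    using t0(3) tm(3) tp(3) by (simp add: psiF_correction_def algebra_simps)
  also have "\<bar>\<dots>\<bar> \<le> - 6 * eta1 (2 * rL) * \<delta>"
    using t0 tm tp K0 Km Kp by (intro abs_psiF_correction_diff_le) auto
  finally show ?thesis .
qed

lemma eta_pair_bounds:
  "u \<in> {rL..rU} \<Longrightarrow> v \<in> {rL..rU} \<Longrightarrow> eta (2 * rU) \<le> eta (u + v) \<and> eta (u + v) \<le> eta (2 * rL)"
  using eta_far_antimono[of "2 * rL" "u + v"] eta_far_antimono[of "u + v" "2 * rU"] by auto

lemma bond_sum_at_lower:
  "v \<in> {rL..rU} \<Longrightarrow> w \<in> {rL..rU} \<Longrightarrow> bond_sum eta rL v w \<le> eta rL + 2 * eta (2 * rL)"
  using eta_pair_bounds[of rL v] eta_pair_bounds[of rL w] window by (simp add: bond_sum_def)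

lemma bond_sum_at_upper:
  "v \<in> {rL..rU} \<Longrightarrow> w \<in> {rL..rU} \<Longrightarrow> eta rU + 2 * eta (2 * rU) \<le> bond_sum eta rU v w"
  using eta_pair_bounds[of rU v] eta_pair_bounds[of rU w] window by (simp add: bond_sum_def)

lemma psiF_correction_bounds:
  assumes "\<forall>i\<in>{K - 1..K + 1}. x i \<in> {rL..rU}"
  shows "2 * eta (2 * rU) - 2 * eta (2 * rL) \<le> psiF_correction eta K x"
    and "psiF_correction eta K x \<le> 2 * eta (2 * rL) - 2 * eta (2 * rU)"
proof -
  have Km: "x (K - 1) \<in> {rL..rU}" and K0: "x K \<in> {rL..rU}" and Kp: "x (K + 1) \<in> {rL..rU}"
    using assms by simp_all
  have "eta (2 * rU) \<le> eta (2 * x K)" "eta (2 * x K) \<le> eta (2 * rL)"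
    using eta_pair_bounds[OF K0 K0] by (simp_all add: mult_2[symmetric])
  then show "2 * eta (2 * rU) - 2 * eta (2 * rL) \<le> psiF_correction eta K x"
    "psiF_correction eta K x \<le> 2 * eta (2 * rL) - 2 * eta (2 * rU)"
    using eta_pair_bounds[OF K0 Km] eta_pair_bounds[OF K0 Kp] unfolding psiF_correction_def by linarith+
qed

lemma psiF_atomistic_relaxation_lipschitz:
  assumes "\<bar>j\<bar> < K"
    and close: "\<forall>i\<in>{j - 1, j, j + 1} \<union> {K - 1..K + 1}. x i \<in> {rL..rU} \<and> y i \<in> {rL..rU} \<and> \<bar>x i - y i\<bar> \<le> \<delta>"
  shows "\<bar>(x j - psiF eta N K x j / eta1 rL) - (y j - psiF eta N K y j / eta1 rL)\<bar>
    \<le> (1 - (eta1 rU + 10 * eta1 (2 * rL)) / eta1 rL) * \<delta>"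
proof -
  have nb: "x i \<in> {rL..rU} \<and> y i \<in> {rL..rU} \<and> \<bar>x i - y i\<bar> \<le> \<delta>"
    if "i \<in> {j - 1, j, j + 1} \<union> {K - 1..K + 1}" for i
    using close that by blast
  have "(x j - psiF eta N K x j / eta1 rL) - (y j - psiF eta N K y j / eta1 rL)
    = ((x j - bond_sum eta (x j) (x (j - 1)) (x (j + 1)) / eta1 rL)
        - (y j - bond_sum eta (y j) (y (j - 1)) (y (j + 1)) / eta1 rL))
      - (psiF_correction eta K x - psiF_correction eta K y) / eta1 rL"
    using \<open>\<bar>j\<bar> < K\<close> by (simp add: psiF_atomistic add_divide_distrib diff_divide_distrib)
  also have "\<bar>\<dots>\<bar> \<le> (1 - (eta1 rU + 4 * eta1 (2 * rL)) / eta1 rL) * \<delta>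
      + (- 6 * eta1 (2 * rL) * \<delta>) / eta1 rL"
  proof (rule order_trans[OF abs_triangle_ineq4 add_mono])
    show "\<bar>(x j - bond_sum eta (x j) (x (j - 1)) (x (j + 1)) / eta1 rL)
        - (y j - bond_sum eta (y j) (y (j - 1)) (y (j + 1)) / eta1 rL)\<bar>
      \<le> (1 - (eta1 rU + 4 * eta1 (2 * rL)) / eta1 rL) * \<delta>"
      using nb[of j] nb[of "j - 1"] nb[of "j + 1"] by (intro bond_sum_relaxation_lipschitz) auto
    have "\<bar>psiF_correction eta K x - psiF_correction eta K y\<bar> \<le> - 6 * eta1 (2 * rL) * \<delta>"
      using nb by (intro psiF_correction_lipschitz) auto
    from divide_right_mono[OF this less_imp_le[OF eta1_rL_pos]]
    show "\<bar>(psiF_correction eta K x - psiF_correction eta K y) / eta1 rL\<bar>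
      \<le> (- 6 * eta1 (2 * rL) * \<delta>) / eta1 rL"
      using eta1_rL_pos by simp
  qed
  also have "\<dots> = (1 - (eta1 rU + 10 * eta1 (2 * rL)) / eta1 rL) * \<delta>"
    using eta1_rL_pos by (simp add: field_simps)
  finally show ?thesis .
qed

lemma psiF_relaxation_lipschitz:
  assumes "0 < K" "K < N" "x \<in> box_on {-N..N} rL rU" "y \<in> box_on {-N..N} rL rU"
    and close: "\<forall>i\<in>{-N..N}. \<bar>x i - y i\<bar> \<le> \<delta>" and "j \<in> {-N..N}"
  shows "\<bar>(x j - psiF eta N K x j / eta1 rL) - (y j - psiF eta N K y j / eta1 rL)\<bar>
    \<le> (1 - (eta1 rU + 10 * eta1 (2 * rL)) / eta1 rL) * \<delta>"
proof (cases "K \<le> \<bar>j\<bar>")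
  case True
  have window_j: "x j \<in> {rL..rU}" "y j \<in> {rL..rU}" "\<bar>x j - y j\<bar> \<le> \<delta>"
    using box_on_memD[OF assms(3)] box_on_memD[OF assms(4)] close \<open>j \<in> {-N..N}\<close> by auto
  have "(1 - (eta1 rU + 4 * eta1 (2 * rL)) / eta1 rL) * \<delta>
      \<le> (1 - (eta1 rU + 10 * eta1 (2 * rL)) / eta1 rL) * \<delta>"
    using window_j eta1_2rL_neg eta1_rL_pos
    by (intro mult_right_mono) (auto simp: divide_right_mono)
  moreover have "\<bar>j\<bar> \<le> N"
    using \<open>j \<in> {-N..N}\<close> by auto
  ultimately show ?thesis
    using True window_j bond_sum_relaxation_lipschitz[of "x j" "x j" "x j" "y j" "y j" "y j" \<delta>]
    by (simp add: psiF_continuum)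
next
  case False
  have "{j - 1, j, j + 1} \<union> {K - 1..K + 1} \<subseteq> {-N..N}"
    using False assms by (intro atomistic_neighbours_subset) auto
  show ?thesis
  proof (rule psiF_atomistic_relaxation_lipschitz)
    show "\<bar>j\<bar> < K"
      using False by simp
    show "\<forall>i\<in>{j - 1, j, j + 1} \<union> {K - 1..K + 1}. x i \<in> {rL..rU} \<and> y i \<in> {rL..rU} \<and> \<bar>x i - y i\<bar> \<le> \<delta>"
      using \<open>{j - 1, j, j + 1} \<union> {K - 1..K + 1} \<subseteq> {-N..N}\<close> box_on_memD[OF assms(3)] box_on_memD[OF assms(4)] close
      by blast
  qed
qed

lemma psiF_at_lower:
  assumes "0 < K" "K < N" "x \<in> box_on {-N..N} rL rU" "j \<in> {-N..N}" "x j = rL"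
  shows "psiF eta N K x j \<le> eta rL + 4 * eta (2 * rL) - 2 * eta (2 * rU)"
proof (cases "K \<le> \<bar>j\<bar>")
  case True
  moreover have "\<bar>j\<bar> \<le> N"
    using assms by auto
  ultimately show ?thesis
    using assms window bond_sum_at_lower[of rL rL] eta_pair_bounds[of rU rU]
    by (simp add: psiF_continuum mult_2[symmetric])
next
  case False
  then have "{j - 1, j, j + 1} \<union> {K - 1..K + 1} \<subseteq> {-N..N}"
    using assms by (intro atomistic_neighbours_subset) auto
  then have "x i \<in> {rL..rU}" if "i \<in> {j - 1, j, j + 1} \<union> {K - 1..K + 1}" for i
    using that box_on_memD[OF assms(3)] by blast
  then show ?thesis
    using False assms bond_sum_at_lower[of "x (j - 1)" "x (j + 1)"] psiF_correction_bounds(2)[of K x]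
    by (simp add: psiF_atomistic)
qed

lemma psiF_at_upper:
  assumes "0 < K" "K < N" "x \<in> box_on {-N..N} rL rU" "j \<in> {-N..N}" "x j = rU"
  shows "eta rU + 4 * eta (2 * rU) - 2 * eta (2 * rL) \<le> psiF eta N K x j"
proof (cases "K \<le> \<bar>j\<bar>")
  case True
  moreover have "\<bar>j\<bar> \<le> N"
    using assms by auto
  ultimately show ?thesis
    using assms window bond_sum_at_upper[of rU rU] eta_pair_bounds[of rL rL]
    by (simp add: psiF_continuum mult_2[symmetric])
next
  case False
  then have "{j - 1, j, j + 1} \<union> {K - 1..K + 1} \<subseteq> {-N..N}"
    using assms by (intro atomistic_neighbours_subset) auto
  then have "x i \<in> {rL..rU}" if "i \<in> {j - 1, j, j + 1} \<union> {K - 1..K + 1}" for i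
    using that box_on_memD[OF assms(3)] by blast
  then show ?thesis
    using False assms bond_sum_at_upper[of "x (j - 1)" "x (j + 1)"] psiF_correction_bounds(1)[of K x]
    by (simp add: psiF_atomistic)
qed

theorem psiF_unique_solution:
  assumes "0 < K" "K < N"
    and Phi: "\<And>j. -N \<le> j \<Longrightarrow> j \<le> N \<Longrightarrow>
      eta rL + 4 * eta (2 * rL) - 2 * eta (2 * rU) < Phi j \<and>
      Phi j < eta rU + 4 * eta (2 * rU) - 2 * eta (2 * rL)"
  shows "\<exists>!r. r \<in> Omega N rL rU \<and> (\<forall>j\<in>{-N..N}. psiF eta N K r j = Phi j)"
proof -
  define F where "F r j = (psiF eta N K r j - Phi j) / eta1 rL" for r j
  have unique: "\<exists>!r. (\<forall>j\<in>{-N..N}. rL < r j \<and> r j < rU \<and> F r j = 0) \<and> (\<forall>j. j \<notin> {-N..N} \<longrightarrow> r j = 0)"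
  proof (rule clamped_relaxation_unique_root)
    show "rL < rU"
      using window by simp
    show "0 \<le> 1 - (eta1 rU + 10 * eta1 (2 * rL)) / eta1 rL" "1 - (eta1 rU + 10 * eta1 (2 * rL)) / eta1 rL < 1"
      by (fact contraction_factor_bounds)+
    show "\<bar>(x j - F x j) - (y j - F y j)\<bar> \<le> (1 - (eta1 rU + 10 * eta1 (2 * rL)) / eta1 rL) * \<delta>"
      if "x \<in> box_on {-N..N} rL rU" "y \<in> box_on {-N..N} rL rU"
        "\<forall>i\<in>{-N..N}. \<bar>x i - y i\<bar> \<le> \<delta>" "j \<in> {-N..N}" for x y \<delta> j
      using psiF_relaxation_lipschitz[OF assms(1,2) that]
      by (simp add: F_def diff_divide_distrib)
    show "F x j < 0" if "x \<in> box_on {-N..N} rL rU" "j \<in> {-N..N}" "x j = rL" for x j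
      using psiF_at_lower[OF assms(1,2) that] Phi[of j] that(2) eta1_rL_pos
      by (simp add: F_def divide_neg_pos)
    show "0 < F x j" if "x \<in> box_on {-N..N} rL rU" "j \<in> {-N..N}" "x j = rU" for x j
      using psiF_at_upper[OF assms(1,2) that] Phi[of j] that(2) eta1_rL_pos
      by (simp add: F_def)
  qed
  have "(r \<in> Omega N rL rU \<and> (\<forall>j\<in>{-N..N}. psiF eta N K r j = Phi j)) \<longleftrightarrow>
      (\<forall>j\<in>{-N..N}. rL < r j \<and> r j < rU \<and> F r j = 0) \<and> (\<forall>j. j \<notin> {-N..N} \<longrightarrow> r j = 0)" for r
    using eta1_rL_pos by (auto simp: Omega_def F_def)
  then show ?thesis
    using unique by (simp only:)
qed

end

theorem theorem4p5:
  fixes phi eta eta1 eta2 :: "real \<Rightarrow> real"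
    and a0 r1 r2 a1 rL rU :: real and N K :: int and Phi :: "int \<Rightarrow> real"
  assumes d1: "\<And>r. r > 0 \<Longrightarrow> (phi has_real_derivative eta r) (at r)"
    and d2: "\<And>r. r > 0 \<Longrightarrow> (eta has_real_derivative eta1 r) (at r)"
    and d3: "\<And>r. r > 0 \<Longrightarrow> (eta1 has_real_derivative eta2 r) (at r)"
    and c3: "continuous_on {0<..} eta2"
    and hc: "0 < a0" "a0 < r1" "r1 < r2" "r2 < 2 * a0" "a1 > a0"
    and h1: "\<And>r. 0 < r \<Longrightarrow> r < r1 \<Longrightarrow> eta1 r > 0" "\<And>r. r > r1 \<Longrightarrow> eta1 r < 0"
    and h2: "\<And>r. 0 < r \<Longrightarrow> r < r2 \<Longrightarrow> eta2 r < 0" "\<And>r. r > r2 \<Longrightarrow> eta2 r > 0"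
    and h3: "\<And>r. 0 < r \<Longrightarrow> r < a0 \<Longrightarrow> eta r + 2 * eta (2 * r) < 0"
            "\<And>r. r > a0 \<Longrightarrow> eta r + 2 * eta (2 * r) > 0"
    and h4: "\<And>r. 0 < r \<Longrightarrow> r < a1 \<Longrightarrow> eta1 r + 4 * eta1 (2 * r) > 0"
            "\<And>r. r > a1 \<Longrightarrow> eta1 r + 4 * eta1 (2 * r) < 0"
    and NK: "0 < N" "0 < K" "K < N - 1"
    and rLU: "r2 / 2 < rL" "rL < rU" "eta1 rU + 12 * eta1 (2 * rL) \<ge> 0"
    and Phib: "\<And>j. -N \<le> j \<Longrightarrow> j \<le> N \<Longrightarrow>
        eta rL + 4 * eta (2 * rL) - 2 * eta (2 * rU) < Phi j \<and>
        Phi j < eta rU + 4 * eta (2 * rU) - 2 * eta (2 * rL)"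
  shows "\<exists>!r. r \<in> Omega N rL rU \<and> (\<forall>j\<in>{-N..N}. psiF eta N K r j = Phi j)"
proof -
  interpret strain_window eta eta1 eta2 r2 rL rU
    using d2 d3 hc h1(2) h2 rLU by unfold_locales auto
  show ?thesis
    using NK Phib by (intro psiF_unique_solution) auto
qed

end
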